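(* The transformation $\mathcal{A}_2$ is an Upsilon transformation with dilation measure $\tau(\mathrm{d}u)=a_1(u;1)\mathrm{d}u$; that is, for $\nu\in\mathfrak{M}_L^2(\mathbb{R}^d)$, $\widetilde\nu=\mathcal{A}_2(\nu)$ satisfies $\widetilde\nu(B)=\mathrm{E}[\nu(A^{-1}B)]$ for all Borel $B\subset\mathbb{R}^d$, where $A$ is a random variable with density $a_1(u;1)$.
   Context: A Lévy measure on $\mathbb{R}^d$ is a measure $\nu$ with $\nu(\{0\})=0$ and $\int(1\wedge|x|^2)\nu(\mathrm{d}x)<\infty$; their class is $\mathfrak{M}_L^2(\mathbb{R}^d)$. For $s>0$ set $a_1(r;s)=2\pi^{-1}(s-r^2)^{-1/2}$ for $0<r<s^{1/2}$ and $0$ otherwise; $a_2(r;s)=2\pi^{-1}(s^2-r^2)^{-1/2}$ for $0<r<s$ and $0$ otherwise. $\mathcal{A}_2(\nu)(B)=\int_{\mathbb{R}^d\setminus\{0\}}\nu(\mathrm{d}x)\int_0^\infty a_2(r;|x|)1_B(rx/|x|)\,\mathrm{d}r$. For a measure $\tau$ on $(0,\infty)$, the Upsilon transformation with dilation measure $\tau$ is $\Upsilon_\tau(\nu)(B)=\int_0^\infty\nu(u^{-1}B)\tau(\mathrm{d}u)$, where $u^{-1}B=\{u^{-1}x:x\in B\}$. *)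

theory Defs
  imports "HOL-Analysis.Analysis"
begin

definition levy_measure :: "'a::euclidean_space measure \<Rightarrow> bool" where
  "levy_measure \<nu> \<longleftrightarrow> sets \<nu> = sets borel \<and> emeasure \<nu> {0} = 0 \<and>
     (\<integral>\<^sup>+ x. ennreal (min 1 (norm x ^ 2)) \<partial>\<nu>) < \<infinity>"

definition a1 :: "real \<Rightarrow> real \<Rightarrow> real" where
  "a1 r s = (if 0 < r \<and> r < sqrt s then 2 / pi * (s - r\<^sup>2) powr (-1/2) else 0)"

definition a2 :: "real \<Rightarrow> real \<Rightarrow> real" where
  "a2 r s = (if 0 < r \<and> r < s then 2 / pi * (s\<^sup>2 - r\<^sup>2) powr (-1/2) else 0)"

definition A2 :: "'a::euclidean_space measure \<Rightarrow> 'a set \<Rightarrow> ennreal" where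
  "A2 \<nu> B = (\<integral>\<^sup>+ x \<in> UNIV - {0}.
      (\<integral>\<^sup>+ r \<in> {0<..}. ennreal (a2 r (norm x)) * indicator B (r *\<^sub>R (x /\<^sub>R norm x)) \<partial>lborel) \<partial>\<nu>)"

definition Upsilon :: "real measure \<Rightarrow> 'a::euclidean_space measure \<Rightarrow> 'a set \<Rightarrow> ennreal" where
  "Upsilon \<tau> \<nu> B = (\<integral>\<^sup>+ u \<in> {0<..}. emeasure \<nu> ((\<lambda>x. inverse u *\<^sub>R x) ` B) \<partial>\<tau>)"

end

theory Submission
  imports Defs
begin

text \<open>
  The substitution \<open>r = |x| u\<close> turns the kernel \<open>a\<^sub>2(r; |x|) dr\<close> of \<open>\<A>\<^sub>2\<close> into
  \<open>a\<^sub>1(u; 1) du\<close>, because \<open>s a\<^sub>2(s u; s) = a\<^sub>1(u; 1)\<close>. Hence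
  \<open>\<A>\<^sub>2(\<nu>)(B) = \<integral> \<nu>(dx) \<integral> a\<^sub>1(u; 1) 1\<^sub>B(u x) du\<close>, and since a Levy measure is
  \<open>\<sigma>\<close>-finite, Tonelli's theorem exchanges the integrals, leaving
  \<open>\<integral> \<nu>(u\<^sup>-\<^sup>1 B) a\<^sub>1(u; 1) du\<close>.
\<close>

lemma measurable_a1 [measurable]: "(\<lambda>u. a1 u s) \<in> borel_measurable borel"
  unfolding a1_def by measurable

lemma measurable_a2 [measurable]: "(\<lambda>r. a2 r s) \<in> borel_measurable borel"
  unfolding a2_def by measurable

lemma a1_nonpos: "u \<le> 0 \<Longrightarrow> a1 u s = 0"
  by (simp add: a1_def)

lemma a2_rescale:
  assumes "0 < s"
  shows "s * a2 (s * u) s = a1 u 1"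
proof (cases "0 < u \<and> u < 1")
  case True
  have "s\<^sup>2 powr (-1/2) = (s powr 2) powr (-1/2)"
    using assms by (simp add: powr_realpow)
  also have "\<dots> = inverse s"
    using assms by (simp add: powr_powr powr_minus)
  finally have "s\<^sup>2 powr (-1/2) = inverse s" .
  moreover have "s\<^sup>2 - (s * u)\<^sup>2 = s\<^sup>2 * (1 - u\<^sup>2)"
    by (simp add: power_mult_distrib right_diff_distrib)
  moreover have "0 < s * u" "s * u < s"
    using True assms by auto
  ultimately have "s * a2 (s * u) s = s * (2 / pi * (inverse s * (1 - u\<^sup>2) powr (-1/2)))"
    using True by (simp add: a2_def powr_mult)
  also have "\<dots> = a1 u 1"
    using True assms by (simp add: a1_def)
  finally show ?thesis .
next
  case False
  with assms have "\<not> (0 < s * u \<and> s * u < s)"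
    by (auto simp: zero_less_mult_iff)
  then have "a2 (s * u) s = 0"
    by (auto simp: a2_def)
  moreover have "a1 u 1 = 0"
    using False by (auto simp: a1_def)
  ultimately show ?thesis
    by simp
qed

lemma levy_measure_emeasure_norm_gt_finite:
  fixes \<nu> :: "'a::euclidean_space measure"
  assumes "levy_measure \<nu>" and "0 < e"
  shows "emeasure \<nu> {x. e < norm x} < \<infinity>"
proof -
  have sets: "sets \<nu> = sets borel"
    and fin: "(\<integral>\<^sup>+ x. ennreal (min 1 (norm x ^ 2)) \<partial>\<nu>) < \<infinity>"
    using assms(1) by (auto simp: levy_measure_def)
  let ?c = "1 / min 1 (e\<^sup>2)"
  have "{x. e < norm x} \<in> sets \<nu>"
    unfolding sets by measurable
  then have "emeasure \<nu> {x. e < norm x} = (\<integral>\<^sup>+ x. indicator {x. e < norm x} x \<partial>\<nu>)"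
    by simp
  also have "\<dots> \<le> (\<integral>\<^sup>+ x. ennreal ?c * ennreal (min 1 (norm x ^ 2)) \<partial>\<nu>)"
  proof (intro nn_integral_mono)
    fix x :: 'a
    show "indicator {x. e < norm x} x \<le> ennreal ?c * ennreal (min 1 (norm x ^ 2))"
    proof (cases "e < norm x")
      case True
      then have "e\<^sup>2 \<le> (norm x)\<^sup>2"
        using assms(2) by (intro power_mono) auto
      then have "min 1 (e\<^sup>2) \<le> min 1 (norm x ^ 2)"
        by simp
      moreover have "0 < min 1 (e\<^sup>2)"
        using assms(2) by simp
      ultimately have "1 \<le> ?c * min 1 (norm x ^ 2)"
        by (simp add: field_simps)
      with True show ?thesis
        by (simp add: ennreal_mult'[symmetric] ennreal_leI flip: ennreal_1)
    qed simp
  qed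
  also have "\<dots> = ennreal ?c * (\<integral>\<^sup>+ x. ennreal (min 1 (norm x ^ 2)) \<partial>\<nu>)"
    by (rule nn_integral_cmult) (simp add: measurable_cong_sets[OF sets refl])
  also have "\<dots> < \<infinity>"
    using fin by (simp add: ennreal_mult_less_top)
  finally show ?thesis .
qed

lemma levy_measure_sigma_finite:
  fixes \<nu> :: "'a::euclidean_space measure"
  assumes "levy_measure \<nu>"
  shows "sigma_finite_measure \<nu>"
proof
  have sets: "sets \<nu> = sets borel" and zero: "emeasure \<nu> {0} = 0"
    using assms by (auto simp: levy_measure_def)
  define S where "S n = {x::'a. 1 / real (Suc n) < norm x}" for n
  have "\<Union> (range S) = - {0}"
  proof (intro equalityI subsetI)
    fix x :: 'a assume "x \<in> - {0}"
    then obtain n where "inverse (norm x) < real (Suc n)"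
      using reals_Archimedean2 less_Suc_eq of_nat_less_iff by (metis less_trans)
    with \<open>x \<in> - {0}\<close> show "x \<in> \<Union> (range S)"
      by (auto simp: S_def field_simps)
  qed (auto simp: S_def)
  then have "\<Union> (insert {0} (range S)) = space \<nu>"
    using sets_eq_imp_space_eq[OF sets] by auto
  moreover have "insert {0} (range S) \<subseteq> sets \<nu>"
    unfolding sets S_def by auto
  moreover have "emeasure \<nu> (S n) \<noteq> \<infinity>" for n
    unfolding S_def using levy_measure_emeasure_norm_gt_finite[OF assms, of "1 / real (Suc n)"] by simp
  ultimately show "\<exists>A. countable A \<and> A \<subseteq> sets \<nu> \<and> \<Union> A = space \<nu> \<and> (\<forall>a\<in>A. emeasure \<nu> a \<noteq> \<infinity>)"
    using zero by (intro exI[of _ "insert {0} (range S)"]) auto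
qed

lemma nn_integral_a2_radial:
  fixes x :: "'a::{real_normed_vector, second_countable_topology}"
  assumes "x \<noteq> 0" and [measurable]: "B \<in> sets borel"
  shows "(\<integral>\<^sup>+ r \<in> {0<..}. ennreal (a2 r (norm x)) * indicator B (r *\<^sub>R (x /\<^sub>R norm x)) \<partial>lborel)
     = (\<integral>\<^sup>+ u. ennreal (a1 u 1) * indicator B (u *\<^sub>R x) \<partial>lborel)"
proof -
  let ?n = "norm x"
  have n: "0 < ?n"
    using assms(1) by simp
  have "(\<lambda>r. ennreal (a2 r ?n) * indicator B (r *\<^sub>R (x /\<^sub>R ?n)) * indicator {0<..} r)
      \<in> borel_measurable borel"
    by measurable
  from nn_integral_real_affine[OF this, of ?n 0]
  have "(\<integral>\<^sup>+ r \<in> {0<..}. ennreal (a2 r ?n) * indicator B (r *\<^sub>R (x /\<^sub>R ?n)) \<partial>lborel)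
      = ennreal ?n * (\<integral>\<^sup>+ u. ennreal (a2 (?n * u) ?n) * indicator B (u *\<^sub>R x) * indicator {0<..} (?n * u) \<partial>lborel)"
    using n by (simp add: field_simps)
  also have "\<dots> = (\<integral>\<^sup>+ u. ennreal (?n * a2 (?n * u) ?n) * indicator B (u *\<^sub>R x) \<partial>lborel)"
    using n by (subst nn_integral_cmult[symmetric]) (auto intro!: nn_integral_cong simp: a2_def ennreal_mult split: split_indicator)
  also have "\<dots> = (\<integral>\<^sup>+ u. ennreal (a1 u 1) * indicator B (u *\<^sub>R x) \<partial>lborel)"
    using n by (simp add: a2_rescale)
  finally show ?thesis .
qed

lemma A2_eq_nn_integral_a1_dilations:
  fixes \<nu> :: "'a::euclidean_space measure"
  assumes "levy_measure \<nu>" and "B \<in> sets borel"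
  shows "A2 \<nu> B = (\<integral>\<^sup>+ x. (\<integral>\<^sup>+ u. ennreal (a1 u 1) * indicator B (u *\<^sub>R x) \<partial>lborel) \<partial>\<nu>)"
  unfolding A2_def
proof (rule nn_integral_cong_AE)
  have "emeasure \<nu> {0} = 0" and "sets \<nu> = sets borel"
    using assms(1) by (auto simp: levy_measure_def)
  then have "AE x in \<nu>. x \<noteq> 0"
    by (intro AE_I'[of "{0}"]) auto
  then show "AE x in \<nu>. (\<integral>\<^sup>+ r \<in> {0<..}. ennreal (a2 r (norm x)) * indicator B (r *\<^sub>R (x /\<^sub>R norm x)) \<partial>lborel)
      * indicator (UNIV - {0}) x = (\<integral>\<^sup>+ u. ennreal (a1 u 1) * indicator B (u *\<^sub>R x) \<partial>lborel)"
  proof eventually_elim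
    case (elim x)
    with nn_integral_a2_radial[OF elim assms(2)] show ?case
      by simp
  qed
qed

lemma image_scaleR_inverse_eq_vimage:
  fixes B :: "'a::real_vector set"
  assumes "c \<noteq> 0"
  shows "(\<lambda>x. inverse c *\<^sub>R x) ` B = (\<lambda>x. c *\<^sub>R x) -` B"
  using assms by (force intro: rev_image_eqI)

lemma Upsilon_density_eq_nn_integral_dilations:
  fixes \<nu> :: "'a::euclidean_space measure"
  assumes "sigma_finite_measure \<nu>" and [measurable_cong]: "sets \<nu> = sets borel"
    and [measurable]: "B \<in> sets borel" "g \<in> borel_measurable borel"
    and g_nonpos: "\<And>u. u \<le> 0 \<Longrightarrow> g u = 0"
  shows "Upsilon (density lborel g) \<nu> B = (\<integral>\<^sup>+ x. (\<integral>\<^sup>+ u. g u * indicator B (u *\<^sub>R x) \<partial>lborel) \<partial>\<nu>)"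
proof -
  interpret sigma_finite_measure \<nu> by fact
  interpret pair_sigma_finite lborel \<nu> ..
  have dilation: "emeasure \<nu> ((\<lambda>x. inverse u *\<^sub>R x) ` B) * indicator {0<..} u
      = indicator {0<..} u * (\<integral>\<^sup>+ x. indicator B (u *\<^sub>R x) \<partial>\<nu>)" for u :: real
  proof (cases "0 < u")
    case True
    have "(\<lambda>x. u *\<^sub>R x) -` B \<in> sets \<nu>"
      using measurable_sets_borel[of "\<lambda>x::'a. u *\<^sub>R x"] by measurable
    with True show ?thesis
      by (simp add: image_scaleR_inverse_eq_vimage indicator_vimage[symmetric])
  qed simp
  have "Upsilon (density lborel g) \<nu> B
      = (\<integral>\<^sup>+ u. indicator {0<..} u * (\<integral>\<^sup>+ x. indicator B (u *\<^sub>R x) \<partial>\<nu>) \<partial>density lborel g)"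
    unfolding Upsilon_def dilation ..
  also have "\<dots> = (\<integral>\<^sup>+ u. g u * (indicator {0<..} u * (\<integral>\<^sup>+ x. indicator B (u *\<^sub>R x) \<partial>\<nu>)) \<partial>lborel)"
    by (rule nn_integral_density) measurable
  also have "\<dots> = (\<integral>\<^sup>+ u. (\<integral>\<^sup>+ x. g u * indicator B (u *\<^sub>R x) \<partial>\<nu>) \<partial>lborel)"
    by (intro nn_integral_cong) (auto simp: g_nonpos nn_integral_cmult split: split_indicator)
  also have "\<dots> = (\<integral>\<^sup>+ x. (\<integral>\<^sup>+ u. g u * indicator B (u *\<^sub>R x) \<partial>lborel) \<partial>\<nu>)"
    by (rule Fubini'[symmetric]) measurable
  finally show ?thesis .
qed

theorem corollary2p14:
  fixes \<nu> :: "'a::euclidean_space measure"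
  assumes "levy_measure \<nu>"
    and "B \<in> sets borel"
  shows "A2 \<nu> B = Upsilon (density lborel (\<lambda>u. ennreal (a1 u 1))) \<nu> B"
proof -
  have "sets \<nu> = sets borel"
    using assms(1) by (simp add: levy_measure_def)
  have "A2 \<nu> B = (\<integral>\<^sup>+ x. (\<integral>\<^sup>+ u. ennreal (a1 u 1) * indicator B (u *\<^sub>R x) \<partial>lborel) \<partial>\<nu>)"
    using assms by (rule A2_eq_nn_integral_a1_dilations)
  also have "\<dots> = Upsilon (density lborel (\<lambda>u. ennreal (a1 u 1))) \<nu> B"
    by (rule Upsilon_density_eq_nn_integral_dilations[symmetric])
      (use assms levy_measure_sigma_finite \<open>sets \<nu> = sets borel\<close> a1_nonpos in auto)
  finally show ?thesis .
qed

end
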